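(* Let $f:\{0,1\}^n\to\mathbb{R}$ be an $s$-sparse polynomial of degree at most $d$ whose M\"obius coefficients satisfy subset-sum independence. Then the Fully-Adaptive Sparse M\"obius Transform (FASMT, described in the context) recovers all non-zero M\"obius coefficients of $f$ (locations and values) using $O(sd\log(n/d))$ adaptive queries to $f$ and $O((sd+n)\cdot sd\log(n/d))$ time.
   Context: Every $f:\{0,1\}^n\to\mathbb{R}$ has a unique expansion $f(\mathbf x)=\sum_{\mathbf k\le\mathbf x}F(\mathbf k)$ (real addition, $\le$ componentwise); the $F(\mathbf k)$ are its M\"obius coefficients. $f$ is $s$-sparse if at most $s$ coefficients are non-zero, and of degree at most $d$ if every $\mathbf k$ with $F(\mathbf k)\ne0$ has Hamming weight at most $d$. Subset-sum independence: for every non-empty $K\subseteq\{\mathbf k:F(\mathbf k)\ne0\}$, $\sum_{\mathbf k\in K}F(\mathbf k)\ne0$. Access to $f$ is via an evaluation oracle returning $f(\mathbf x)$. Boolean products are over the Boolean semiring (OR, AND), $\neg$ is bitwise negation, $\|$ concatenation; $\prec$ is lexicographic order on binary strings (a proper prefix is smaller; otherwise compare at the first differing position). Hwang's generalized binary splitting algorithm (GBSA) is a deterministic adaptive group-testing procedure that identifies an unknown $\mathbf k\in\{0,1\}^n$ with $|\mathbf k|\le d$ from tests $\mathbf h^\top\mathbf k\in\{0,1\}$ using $O(d\log(n/d))$ tests; it partitions $[n]$ into $d$ parts of size about $n/d$ and in each part repeatedly tests the part and, if positive, locates one element of the support by halving, removes it, and repeats. Given the string $\boldsymbol\ell$ of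 previous outcomes, GBSA$(\boldsymbol\ell)$ either returns a next test vector $\mathbf h$ or declares the result $\mathbf k$. FASMT: maintain a priority queue (lexicographic order on labels) of triples (label $\boldsymbol\ell$, bin sum $v$, matrix $\mathbf H$ of test vectors along the path), starting with $(\text{empty},f(\mathbf 1),\text{empty})$, and a table $T$ of discovered coefficients (initially zero). Repeatedly extract the minimal label; skip it if $v=0$; if GBSA$(\boldsymbol\ell)$ returns a result $\mathbf k$, set $T(\mathbf k)=v$; otherwise, with test vector $\mathbf h$, query $m=f(\mathbf x)-\sum_{\mathbf k\le\mathbf x}T(\mathbf k)$ at $\mathbf x=\neg((\mathbf H\|\mathbf h)\cdot\neg(\boldsymbol\ell\|0))$ and insert children $(\boldsymbol\ell\|0,m,\mathbf H\|\mathbf h)$ and $(\boldsymbol\ell\|1,v-m,\mathbf H\|\mathbf h)$. Output $T$ when the queue is empty. *)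

theory Defs
  imports Complex_Main
begin

text \<open>A point x in {0,1}^n is identified with its support, a subset of {..<n}.
  Componentwise order is set inclusion, Hamming weight is card, bitwise negation is
  complement relative to {..<n}.  A function f on {0,1}^n is a function on subsets
  of {..<n} (values elsewhere are irrelevant and never queried).\<close>

definition is_mobius_coeffs :: "nat \<Rightarrow> (nat set \<Rightarrow> real) \<Rightarrow> (nat set \<Rightarrow> real) \<Rightarrow> bool" where
  "is_mobius_coeffs n f F \<longleftrightarrow>
     (\<forall>k. F k \<noteq> 0 \<longrightarrow> k \<subseteq> {..<n}) \<and>
     (\<forall>x. x \<subseteq> {..<n} \<longrightarrow> f x = (\<Sum>k\<in>Pow x. F k))"

definition mob_support :: "(nat set \<Rightarrow> real) \<Rightarrow> nat set set" where
  "mob_support F = {k. F k \<noteq> 0}"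

definition sparse :: "nat \<Rightarrow> (nat set \<Rightarrow> real) \<Rightarrow> bool" where
  "sparse s F \<longleftrightarrow> card (mob_support F) \<le> s"

definition degree_le :: "nat \<Rightarrow> (nat set \<Rightarrow> real) \<Rightarrow> bool" where
  "degree_le d F \<longleftrightarrow> (\<forall>k. F k \<noteq> 0 \<longrightarrow> card k \<le> d)"

definition subset_sum_independent :: "(nat set \<Rightarrow> real) \<Rightarrow> bool" where
  "subset_sum_independent F \<longleftrightarrow>
     (\<forall>K. K \<subseteq> mob_support F \<longrightarrow> K \<noteq> {} \<longrightarrow> sum F K \<noteq> 0)"

fun lex_less :: "bool list \<Rightarrow> bool list \<Rightarrow> bool" where
  "lex_less [] ys = (ys \<noteq> [])"
| "lex_less (x # xs) [] = False"
| "lex_less (x # xs) (y # ys) = (if x = y then lex_less xs ys else (\<not> x \<and> y))"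

definition gbsa_part :: "nat \<Rightarrow> nat \<Rightarrow> nat \<Rightarrow> nat list" where
  "gbsa_part n d j = [j * n div d ..< (Suc j) * n div d]"

text \<open>States: Done K (result found); PartT j R K: about to test the remaining
  elements R of part j; SearchT j R C K: C \<subseteq> R is known to contain a
  positive, halving is in progress.  K is the support found so far.\<close>
datatype gstate =
    GDone "nat set"
  | PartT nat "nat list" "nat set"
  | SearchT nat "nat list" "nat list" "nat set"

definition gbsa_start_part :: "nat \<Rightarrow> nat \<Rightarrow> nat \<Rightarrow> nat set \<Rightarrow> gstate" where
  "gbsa_start_part n d j K = (if d \<le> j then GDone K else PartT j (gbsa_part n d j) K)"

definition gbsa_found :: "nat \<Rightarrow> nat \<Rightarrow> nat \<Rightarrow> nat list \<Rightarrow> nat \<Rightarrow> nat set \<Rightarrow> gstate" where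
  "gbsa_found n d j R c K =
     (let R' = remove1 c R; K' = insert c K
      in if R' = [] then gbsa_start_part n d (Suc j) K' else PartT j R' K')"

definition gbsa_search :: "nat \<Rightarrow> nat \<Rightarrow> nat \<Rightarrow> nat list \<Rightarrow> nat list \<Rightarrow> nat set \<Rightarrow> gstate" where
  "gbsa_search n d j R C K =
     (if length C \<le> 1 then gbsa_found n d j R (hd C) K else SearchT j R C K)"

text \<open>Transition on a test outcome b (True = 1 = positive).\<close>
fun gbsa_trans :: "nat \<Rightarrow> nat \<Rightarrow> gstate \<Rightarrow> bool \<Rightarrow> gstate" where
  "gbsa_trans n d (GDone K) b = GDone K"
| "gbsa_trans n d (PartT j R K) b =
     (if b then gbsa_search n d j R R K else gbsa_start_part n d (Suc j) K)"
| "gbsa_trans n d (SearchT j R C K) b =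
     (let h = length C div 2 in
      if b then gbsa_search n d j R (take h C) K else gbsa_search n d j R (drop h C) K)"

definition gbsa_state :: "nat \<Rightarrow> nat \<Rightarrow> bool list \<Rightarrow> gstate" where
  "gbsa_state n d ls = foldl (gbsa_trans n d) (gbsa_start_part n d 0 {}) ls"

datatype gresult = GTest "nat set" | GResult "nat set"

definition gbsa :: "nat \<Rightarrow> nat \<Rightarrow> bool list \<Rightarrow> gresult" where
  "gbsa n d ls = (case gbsa_state n d ls of
       GDone K \<Rightarrow> GResult K
     | PartT j R K \<Rightarrow> GTest (set R)
     | SearchT j R C K \<Rightarrow> GTest (set (take (length C div 2) C)))"

type_synonym qentry = "bool list \<times> real \<times> nat set list"

fun pq_insert :: "qentry \<Rightarrow> qentry list \<Rightarrow> qentry list" where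
  "pq_insert e [] = [e]"
| "pq_insert e (e' # q) = (if lex_less (fst e) (fst e') then e # e' # q else e' # pq_insert e q)"

text \<open>Query point x = not((H || h) . not(l || 0)) over the Boolean semiring, i.e. the
  complement of the union of the tests whose outcome bit is 0 (including the new test h).\<close>
definition query_point :: "nat \<Rightarrow> bool list \<Rightarrow> nat set list \<Rightarrow> nat set \<Rightarrow> nat set" where
  "query_point n l H h =
     {..<n} - ((\<Union>i\<in>{i. i < length l \<and> \<not> l ! i}. H ! i) \<union> h)"

record fstate =
  queue :: "qentry list"
  table :: "nat set \<Rightarrow> real"
  nqueries :: nat
  cost :: real

text \<open>Cost model (elementary operations): every iteration pays 1 + log2(queue length + 1)
  for the priority-queue operation; a call of GBSA and writing its output cost n;
  forming the query point costs n; the residual sum over the table costs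
  sum over stored coefficients k of (|k| + 1).\<close>
definition fasmt_step :: "nat \<Rightarrow> nat \<Rightarrow> (nat set \<Rightarrow> real) \<Rightarrow> fstate \<Rightarrow> fstate" where
  "fasmt_step n d f st =
    (case queue st of
       [] \<Rightarrow> st
     | (l, v, H) # Q \<Rightarrow>
         (let base = cost st + 1 + log 2 (real (length (queue st)) + 1) in
          if v = 0 then st\<lparr>queue := Q, cost := base\<rparr>
          else (case gbsa n d l of
                  GResult k \<Rightarrow> st\<lparr>queue := Q, table := (table st)(k := v),
                                   cost := base + real n\<rparr>
                | GTest h \<Rightarrow>
                    (let x = query_point n l H h;
                         m = f x - (\<Sum>k\<in>Pow x. table st k)
                     in st\<lparr>queue := pq_insert (l @ [True], v - m, H @ [h])
                                       (pq_insert (l @ [False], m, H @ [h]) Q),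
                           nqueries := Suc (nqueries st),
                           cost := base + 2 * real n
                                   + (\<Sum>k\<in>{k. table st k \<noteq> 0}. real (card k) + 1)\<rparr>))))"

definition fasmt_init :: "nat \<Rightarrow> (nat set \<Rightarrow> real) \<Rightarrow> fstate" where
  "fasmt_init n f = \<lparr>queue = [([], f {..<n}, [])], table = (\<lambda>_. 0),
                      nqueries = 1, cost = real n\<rparr>"

definition fasmt_iter :: "nat \<Rightarrow> nat \<Rightarrow> (nat set \<Rightarrow> real) \<Rightarrow> nat \<Rightarrow> fstate" where
  "fasmt_iter n d f t = (fasmt_step n d f ^^ t) (fasmt_init n f)"

end

theory Submission
  imports Defs "HOL-Library.Sublist" "HOL-Library.Log_Nat"
begin

(* For a support element k, let path k be the outcome string GBSA produces when the hidden
   vector is k; over the Boolean semiring the outcome of test h is h \<inter> k \<noteq> {}. A queue entry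
   with label l holds the sum of F over the bin of l, the support elements whose path extends
   l. If GBSA proposes the test h at l, the query point x is the complement of the union of h
   and of all earlier tests answered 0, and every support element below x either lies in the
   bin of l||0 or has a path diverging to the left of l. Labels are processed in
   lexicographic order, so the latter coefficients are already in the table, and f x minus
   the table sum is the bin sum of l||0; that of l||1 follows by subtraction. Subset-sum
   independence makes a bin empty iff its sum is 0, so only the nodes of the tree of all
   prefixes of the at most s paths get expanded. The paths have length O(d (1 + log (n/d))),
   which bounds the number of queries, and one iteration costs O(sd + n). *)

section \<open>Binary strings diverging to the left\<close>

fun diverges_left :: "bool list \<Rightarrow> bool list \<Rightarrow> bool" where
  "diverges_left (x # xs) (y # ys) = (if x = y then diverges_left xs ys else \<not> x \<and> y)"
| "diverges_left _ _ = False"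

lemma diverges_left_append_same [simp]:
  "diverges_left (u @ xs) (u @ ys) \<longleftrightarrow> diverges_left xs ys"
  by (induction u) auto

lemma diverges_left_iff:
  "diverges_left xs ys \<longleftrightarrow> (\<exists>u r1 r2. xs = u @ False # r1 \<and> ys = u @ True # r2)"
proof
  show "diverges_left xs ys \<Longrightarrow> \<exists>u r1 r2. xs = u @ False # r1 \<and> ys = u @ True # r2"
  proof (induction xs ys rule: diverges_left.induct)
    case (1 x xs y ys)
    show ?case
    proof (cases "x = y")
      case True
      then obtain u r1 r2 where "xs = u @ False # r1" "ys = u @ True # r2"
        using 1 by auto
      then have "x # xs = (x # u) @ False # r1 \<and> y # ys = (x # u) @ True # r2"
        using True by simp
      then show ?thesis by blast
    next
      case False
      then have "x # xs = [] @ False # xs \<and> y # ys = [] @ True # ys"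
        using "1.prems" by auto
      then show ?thesis by blast
    qed
  qed simp_all
qed auto

lemma diverges_left_lex_less: "diverges_left xs ys \<Longrightarrow> lex_less xs ys"
  by (induction xs ys rule: lex_less.induct) (auto split: if_splits)

lemma diverges_left_not_lex_less: "diverges_left xs ys \<Longrightarrow> \<not> lex_less ys xs"
  by (induction xs ys rule: lex_less.induct) (auto split: if_splits)

lemma diverges_left_irrefl: "\<not> diverges_left xs xs"
  by (induction xs) simp_all

lemma diverges_left_trans:
  "diverges_left xs ys \<Longrightarrow> diverges_left ys zs \<Longrightarrow> diverges_left xs zs"
proof (induction xs ys arbitrary: zs rule: diverges_left.induct)
  case (1 x xs y ys)
  then show ?case by (cases zs) (auto split: if_splits)
qed simp_all

lemma diverges_left_prefix_mono:
  "diverges_left xs ys \<Longrightarrow> prefix xs xs' \<Longrightarrow> prefix ys ys' \<Longrightarrow> diverges_left xs' ys'"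
proof (induction xs ys arbitrary: xs' ys' rule: diverges_left.induct)
  case (1 x xs y ys)
  then show ?case by (cases xs'; cases ys') (auto split: if_splits)
qed simp_all

lemma diverges_left_no_common_extension:
  "diverges_left xs ys \<Longrightarrow> prefix xs zs \<Longrightarrow> prefix ys zs \<Longrightarrow> False"
  using prefix_same_cases diverges_left_prefix_mono diverges_left_irrefl by blast

lemma prefix_or_diverges_left:
  "prefix xs ys \<or> prefix ys xs \<or> diverges_left xs ys \<or> diverges_left ys xs"
  by (induction xs ys rule: diverges_left.induct) auto

lemma prefix_neqE:
  assumes "prefix xs ys" "xs \<noteq> ys"
  obtains b where "prefix (xs @ [b]) ys"
proof -
  obtain zs where "ys = xs @ zs" "zs \<noteq> []" using assms by (auto simp: prefix_def)
  then show thesis using that by (cases zs) auto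
qed

lemma set_pq_insert: "set (pq_insert e Q) = insert e (set Q)"
  by (induction e Q rule: pq_insert.induct) auto

lemma length_pq_insert: "length (pq_insert e Q) = Suc (length Q)"
  by (induction e Q rule: pq_insert.induct) auto

lemma sum_list_map_pq_insert:
  fixes g :: "qentry \<Rightarrow> 'a::comm_monoid_add"
  shows "sum_list (map g (pq_insert e Q)) = g e + sum_list (map g Q)"
  by (induction e Q rule: pq_insert.induct) (auto simp: add.left_commute)

lemma sorted_pq_insert:
  assumes "sorted_wrt (\<lambda>q q'. diverges_left (fst q) (fst q')) Q"
    and "\<forall>q\<in>set Q. diverges_left (fst e) (fst q) \<or> diverges_left (fst q) (fst e)"
  shows "sorted_wrt (\<lambda>q q'. diverges_left (fst q) (fst q')) (pq_insert e Q)"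
  using assms
proof (induction e Q rule: pq_insert.induct)
  case (2 e e' Q)
  show ?case
  proof (cases "lex_less (fst e) (fst e')")
    case True
    then have "diverges_left (fst e) (fst e')"
      using "2.prems"(2) diverges_left_not_lex_less by auto
    then show ?thesis using True "2.prems"(1) diverges_left_trans by auto
  next
    case False
    then have "diverges_left (fst e') (fst e)"
      using "2.prems"(2) diverges_left_lex_less by auto
    then show ?thesis using False 2 by (auto simp: set_pq_insert)
  qed
qed simp

section \<open>Numerical estimates\<close>

lemma log2_div_le:
  assumes "1 \<le> d" "d \<le> n"
  shows "log 2 (real n / real d) \<le> real n"
proof -
  have "log 2 (real n / real d) \<le> log 2 (real n)"
    using assms by (simp add: divide_le_eq)
  also have "\<dots> \<le> real n"
    using assms less_exp[of n] by (intro log2_of_power_le) auto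
  finally show ?thesis .
qed

lemma ceillog2_Suc_div_le:
  assumes "1 \<le> d" "d \<le> n"
  shows "real (ceillog2 (Suc (n div d))) \<le> log 2 (real n / real d) + 2"
proof -
  have ratio: "1 \<le> real n / real d" using assms by simp
  have "real (n div d) \<le> real n / real d" by (rule of_nat_div_le_of_nat)
  then have "real (Suc (n div d)) \<le> 2 * (real n / real d)" using ratio by simp
  then have "log 2 (real (Suc (n div d))) \<le> log 2 (2 * (real n / real d))"
    by simp
  also have "\<dots> = 1 + log 2 (real n / real d)"
    using assms log_mult[of 2 2 "real n / real d"] by simp
  finally show ?thesis using ceillog2_less_log[of "Suc (n div d)"] by simp
qed

lemma log2_tree_size_le:
  fixes s d e N :: nat
  assumes "1 \<le> s" "1 \<le> d" "N \<le> s * (d * (2 + e) + 1)"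
  shows "log 2 (real (3 * N + 1) + 1) \<le> real (5 + s + d + e)"
proof -
  define A where "A = s * (d * (2 + e))"
  have "2 \<le> d * (2 + e)" using assms(2) mult_le_mono[of 1 d 2 "2 + e"] by simp
  then have "2 * s \<le> A" unfolding A_def using mult_le_mono2 by (simp add: mult.commute)
  moreover have "N \<le> A + s" using assms(3) by (simp add: A_def)
  ultimately have "3 * N + 2 \<le> 2 ^ 3 * A" using assms(1) by simp
  also have "\<dots> \<le> 2 ^ 3 * (2 ^ s * (2 ^ d * 2 ^ (2 + e)))"
    unfolding A_def using less_exp[of s] less_exp[of d] less_exp[of "2 + e"]
    by (intro mult_le_mono) auto
  also have "\<dots> = 2 ^ (5 + s + d + e)" by (simp add: power_add)
  finally show ?thesis
    using log2_of_power_le[of "3 * N + 2" "5 + s + d + e"] by (simp add: add.commute)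
qed

lemma complexity_arith:
  fixes s d n L e N G :: real
  assumes s: "1 \<le> s" and d: "1 \<le> d" and L: "0 \<le> L" "L \<le> n"
    and N: "0 \<le> N" "N \<le> s * (d * (2 + e) + 1)" and e: "e \<le> L + 2"
    and G: "0 \<le> G" "G \<le> 5 + s + d + e"
  shows "1 + N \<le> 6 * s * d * (1 + L)"
    and "n + (3 * N + 1) * (1 + G + 2 * n + s * (d + 1)) \<le> 250 * (s * d + n) * s * d * (1 + L)"
proof -
  define P where "P = s * d"
  define X where "X = P * (1 + L)"
  define Y where "Y = P + n"
  have P: "1 \<le> P" "s \<le> P" "d \<le> P"
    using mult_mono[OF s d] mult_left_mono[OF d, of s] mult_right_mono[OF s, of d] s d
    by (simp_all add: P_def)
  have X_eq: "X = P + P * L" by (simp add: X_def algebra_simps)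
  have PL: "0 \<le> P * L" using P L by simp
  have X: "P \<le> X" using X_eq PL by simp
  have Y: "1 \<le> Y" "n \<le> Y" "P \<le> Y" using P L by (simp_all add: Y_def)
  have "d * (2 + e) + 1 \<le> d * (4 + L) + 1" using d e by simp
  then have "N \<le> s * (d * (4 + L) + 1)"
    using N(2) s mult_left_mono[of "d * (2 + e) + 1" "d * (4 + L) + 1" s] by linarith
  also have "\<dots> = 4 * P + P * L + s" by (simp add: P_def algebra_simps)
  also have "\<dots> \<le> 5 * X" using P PL X_eq by linarith
  finally have N5: "N \<le> 5 * X" .
  then show "1 + N \<le> 6 * s * d * (1 + L)"
    using X P by (simp add: X_def P_def algebra_simps)
  have "1 + G + 2 * n + s * (d + 1) = 1 + G + 2 * n + P + s" by (simp add: P_def algebra_simps)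
  also have "\<dots> \<le> 15 * Y" using G e L P Y by linarith
  finally have "1 + G + 2 * n + s * (d + 1) \<le> 15 * Y" .
  then have "(3 * N + 1) * (1 + G + 2 * n + s * (d + 1)) \<le> (16 * X) * (15 * Y)"
    using N5 X P N(1) G(1) L s d by (intro mult_mono) auto
  moreover have "Y \<le> X * Y" using mult_right_mono[of 1 X Y] X P Y by simp
  ultimately have "n + (3 * N + 1) * (1 + G + 2 * n + s * (d + 1)) \<le> 241 * (X * Y)"
    using Y(2) by simp
  also have "\<dots> \<le> 250 * (X * Y)" using X Y P by simp
  finally show "n + (3 * N + 1) * (1 + G + 2 * n + s * (d + 1)) \<le> 250 * (s * d + n) * s * d * (1 + L)"
    by (simp add: X_def Y_def P_def algebra_simps)
qed

section \<open>Runs of generalized binary splitting\<close>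

definition gbsa_run :: "nat \<Rightarrow> nat \<Rightarrow> nat set \<Rightarrow> bool list \<Rightarrow> bool" where
  "gbsa_run n d k bs \<longleftrightarrow> gbsa n d bs = GResult k \<and>
     (\<forall>l b. prefix (l @ [b]) bs \<longrightarrow> (\<exists>h. gbsa n d l = GTest h \<and> (b \<longleftrightarrow> h \<inter> k \<noteq> {})))"

lemma gbsa_run_prefix_eq:
  assumes "gbsa_run n d k xs" "gbsa_run n d k ys" "prefix xs ys"
  shows "xs = ys"
proof (rule ccontr)
  assume "xs \<noteq> ys"
  with assms(3) obtain b where "prefix (xs @ [b]) ys" by (rule prefix_neqE)
  then show False using assms(1,2) unfolding gbsa_run_def by (metis gresult.distinct(1))
qed

lemma gbsa_run_not_diverges_left:
  assumes "gbsa_run n d k xs" "gbsa_run n d k ys"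
  shows "\<not> diverges_left xs ys"
proof
  assume "diverges_left xs ys"
  then obtain u r1 r2 where "xs = u @ False # r1" "ys = u @ True # r2"
    by (auto simp: diverges_left_iff)
  then have "prefix (u @ [False]) xs" "prefix (u @ [True]) ys" by (simp_all add: prefix_def)
  then show False using assms unfolding gbsa_run_def by (metis gresult.inject(1))
qed

lemma gbsa_run_unique: "gbsa_run n d k xs \<Longrightarrow> gbsa_run n d k ys \<Longrightarrow> xs = ys"
  using prefix_or_diverges_left gbsa_run_prefix_eq gbsa_run_not_diverges_left by metis

definition gstate_output :: "gstate \<Rightarrow> gresult" where
  "gstate_output st = (case st of
       GDone K \<Rightarrow> GResult K
     | PartT j R K \<Rightarrow> GTest (set R)
     | SearchT j R C K \<Rightarrow> GTest (set (take (length C div 2) C)))"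

lemma gbsa_eq_gstate_output: "gbsa n d l = gstate_output (gbsa_state n d l)"
  unfolding gbsa_def gstate_output_def ..

lemma length_gbsa_part: "length (gbsa_part n d j) \<le> Suc (n div d)"
proof -
  have "Suc j * n div d = (j * n + n) div d" by (simp add: add.commute)
  also have "\<dots> = j * n div d + n div d + (j * n mod d + n mod d) div d"
    by (rule div_add1_eq)
  also have "(j * n mod d + n mod d) div d \<le> 1"
  proof (cases "d = 0")
    case False
    then have "j * n mod d < d" "n mod d < d" by simp_all
    then have "j * n mod d + n mod d < 2 * d" by linarith
    then have "(j * n mod d + n mod d) div d < 2" by (rule less_mult_imp_div_less)
    then show ?thesis by simp
  qed simp
  finally show ?thesis by (simp add: gbsa_part_def)
qed

lemma distinct_gbsa_part: "distinct (gbsa_part n d j)"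
  by (simp add: gbsa_part_def)

locale gbsa_target =
  fixes n d :: nat and k :: "nat set"
  assumes d_pos: "1 \<le> d" and k_subset: "k \<subseteq> {..<n}"
begin

abbreviation depth :: nat where "depth \<equiv> ceillog2 (Suc (n div d))"

definition lo :: "nat \<Rightarrow> nat" where "lo j = j * n div d"

lemma set_gbsa_part: "set (gbsa_part n d j) = {lo j..<lo (Suc j)}"
  by (simp add: gbsa_part_def lo_def)

lemma finite_k: "finite k"
  using k_subset finite_subset by blast

definition consistent_part :: "nat \<Rightarrow> nat list \<Rightarrow> nat set \<Rightarrow> bool" where
  "consistent_part j R K \<longleftrightarrow> j < d \<and> distinct R \<and> set R \<subseteq> {lo j..<lo (Suc j)} \<and>
     K = k \<inter> ({..<lo (Suc j)} - set R)"

fun consistent :: "gstate \<Rightarrow> bool" where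
  "consistent (GDone K) \<longleftrightarrow> K = k"
| "consistent (PartT j R K) \<longleftrightarrow> consistent_part j R K"
| "consistent (SearchT j R C K) \<longleftrightarrow>
     consistent_part j R K \<and> set C \<subseteq> set R \<and> k \<inter> set C \<noteq> {} \<and> 2 \<le> length C"

text \<open>The term \<open>d - j\<close> pays for the negative tests of the remaining parts; every element
  of \<open>k\<close> not yet found pays for one positive part test and at most \<open>depth\<close> halvings.\<close>

fun potential :: "gstate \<Rightarrow> nat" where
  "potential (GDone K) = 0"
| "potential (PartT j R K) = (d - j) + card (k - K) * (1 + depth)"
| "potential (SearchT j R C K) =
     ceillog2 (length C) + (d - j) + (card (k - K) - 1) * (1 + depth)"

lemma ceillog2_length_part:
  assumes "consistent_part j R K"
  shows "ceillog2 (length R) \<le> depth"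
proof -
  have "length R = card (set R)"
    using assms by (simp add: consistent_part_def distinct_card)
  also have "\<dots> \<le> card (set (gbsa_part n d j))"
    using assms by (intro card_mono) (auto simp: consistent_part_def set_gbsa_part)
  also have "\<dots> \<le> Suc (n div d)"
    using card_length length_gbsa_part order_trans by blast
  finally show ?thesis by (rule ceillog2_mono)
qed

lemma card_missing_pos:
  assumes "consistent_part j R K" "c \<in> set R" "c \<in> k"
  shows "1 \<le> card (k - K)"
proof -
  have "k - K \<noteq> {}" using assms by (auto simp: consistent_part_def)
  then have "0 < card (k - K)" using finite_k by (simp add: card_gt_0_iff)
  then show ?thesis by simp
qed

lemma start_part_consistent:
  assumes "j \<le> d" "K = k \<inter> {..<lo j}"
  shows "consistent (gbsa_start_part n d j K) \<and>
         potential (gbsa_start_part n d j K) \<le> (d - j) + card (k - K) * (1 + depth)"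
proof (cases "d \<le> j")
  case True
  then have "j = d" using assms(1) by simp
  then have "lo j = n" using d_pos unfolding lo_def by simp
  then have "K = k" using assms k_subset by auto
  then show ?thesis using True by (simp add: gbsa_start_part_def)
next
  case False
  have "lo j \<le> lo (Suc j)" by (simp add: lo_def div_le_mono)
  then have "K = k \<inter> ({..<lo (Suc j)} - {lo j..<lo (Suc j)})" using assms by auto
  then show ?thesis
    using False
    by (simp add: gbsa_start_part_def consistent_part_def set_gbsa_part[symmetric] distinct_gbsa_part)
qed

lemma found_consistent:
  assumes cons: "consistent_part j R K" and c: "c \<in> set R" "c \<in> k"
  shows "consistent (gbsa_found n d j R c K) \<and>
         potential (gbsa_found n d j R c K) \<le> (d - j) + (card (k - K) - 1) * (1 + depth)"
proof -
  define R' where "R' = remove1 c R"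
  define K' where "K' = insert c K"
  have set_R': "set R' = set R - {c}"
    using cons by (simp add: R'_def consistent_part_def set_remove1_eq)
  have "c \<notin> K" using cons c by (auto simp: consistent_part_def)
  moreover have "k - K' = (k - K) - {c}" by (auto simp: K'_def)
  ultimately have card_K': "card (k - K') = card (k - K) - 1"
    using c finite_k by (simp add: card_Diff_singleton)
  have K': "K' = k \<inter> ({..<lo (Suc j)} - set R')"
    using cons c by (auto simp: K'_def set_R' consistent_part_def)
  show ?thesis
  proof (cases "R' = []")
    case True
    have "Suc j \<le> d" using cons by (simp add: consistent_part_def)
    moreover have "K' = k \<inter> {..<lo (Suc j)}" using K' True by simp
    ultimately have "consistent (gbsa_start_part n d (Suc j) K') \<and>
      potential (gbsa_start_part n d (Suc j) K') \<le> (d - Suc j) + card (k - K') * (1 + depth)"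
      by (rule start_part_consistent)
    moreover have "gbsa_found n d j R c K = gbsa_start_part n d (Suc j) K'"
      using True by (simp add: gbsa_found_def R'_def K'_def)
    ultimately show ?thesis using card_K' by auto
  next
    case False
    have "distinct R'" "set R' \<subseteq> set R"
      using cons set_R' by (simp_all add: consistent_part_def R'_def)
    then have "consistent (PartT j R' K')"
      using cons K' by (auto simp: consistent_part_def)
    moreover have "gbsa_found n d j R c K = PartT j R' K'"
      using False by (simp add: gbsa_found_def R'_def K'_def Let_def)
    ultimately show ?thesis using card_K' by simp
  qed
qed

lemma search_consistent:
  assumes cons: "consistent_part j R K" and C: "set C \<subseteq> set R" "k \<inter> set C \<noteq> {}"
  shows "consistent (gbsa_search n d j R C K) \<and>
         potential (gbsa_search n d j R C K)
           \<le> ceillog2 (length C) + (d - j) + (card (k - K) - 1) * (1 + depth)"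
proof (cases "length C \<le> 1")
  case True
  then obtain c where "C = [c]" using C by (cases C) auto
  then show ?thesis
    using found_consistent[OF cons] C by (simp add: gbsa_search_def)
next
  case False
  then show ?thesis using cons C by (simp add: gbsa_search_def)
qed

lemma trans_part_consistent:
  assumes cons: "consistent_part j R K"
  defines "st' \<equiv> gbsa_trans n d (PartT j R K) (set R \<inter> k \<noteq> {})"
  shows "consistent st' \<and> potential st' < potential (PartT j R K)"
proof (cases "set R \<inter> k = {}")
  case True
  have "Suc j \<le> d" "K = k \<inter> {..<lo (Suc j)}"
    using cons True by (auto simp: consistent_part_def)
  then have "consistent (gbsa_start_part n d (Suc j) K) \<and>
      potential (gbsa_start_part n d (Suc j) K) \<le> (d - Suc j) + card (k - K) * (1 + depth)"
    by (rule start_part_consistent)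
  moreover have "d - Suc j < d - j" using \<open>Suc j \<le> d\<close> by simp
  ultimately show ?thesis using True by (auto simp: st'_def)
next
  case False
  then obtain c where "c \<in> set R" "c \<in> k" by auto
  then have "1 \<le> card (k - K)" using card_missing_pos cons by blast
  moreover have "ceillog2 (length R) \<le> depth" using ceillog2_length_part cons .
  ultimately have "ceillog2 (length R) + (d - j) + (card (k - K) - 1) * (1 + depth)
      < (d - j) + card (k - K) * (1 + depth)"
    by (cases "card (k - K)") auto
  moreover have "k \<inter> set R \<noteq> {}" using False by auto
  ultimately show ?thesis
    using search_consistent[OF cons order_refl] False by (auto simp: st'_def)
qed

lemma trans_search_consistent:
  assumes cons: "consistent (SearchT j R C K)"
  defines "m \<equiv> length C div 2"
  defines "st' \<equiv> gbsa_trans n d (SearchT j R C K) (set (take m C) \<inter> k \<noteq> {})"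
  shows "consistent st' \<and> potential st' < potential (SearchT j R C K)"
proof -
  have cons_j: "consistent_part j R K"
    and C: "set C \<subseteq> set R" "k \<inter> set C \<noteq> {}" "2 \<le> length C"
    using cons by simp_all
  have "length (take m C) \<le> (length C + 1) div 2" "length (drop m C) \<le> (length C + 1) div 2"
    by (auto simp: m_def)
  moreover have "ceillog2 (length C) = 1 + ceillog2 ((length C + 1) div 2)"
    using C(3) ceillog2_rec[of "length C"] by simp
  ultimately have halves: "ceillog2 (length (take m C)) < ceillog2 (length C)"
                          "ceillog2 (length (drop m C)) < ceillog2 (length C)"
    using ceillog2_mono by (metis less_Suc_eq_le plus_1_eq_Suc)+
  have "set (take m C) \<subseteq> set R" "set (drop m C) \<subseteq> set R"
    using C(1) set_take_subset set_drop_subset by fastforce+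
  show ?thesis
  proof (cases "set (take m C) \<inter> k = {}")
    case True
    have "set C = set (take m C) \<union> set (drop m C)"
      by (metis append_take_drop_id set_append)
    then have "k \<inter> set (drop m C) \<noteq> {}" using C(2) True by auto
    then show ?thesis
      using search_consistent[OF cons_j \<open>set (drop m C) \<subseteq> set R\<close>] True halves(2)
      by (simp add: st'_def m_def Let_def)
  next
    case False
    then have "k \<inter> set (take m C) \<noteq> {}" by auto
    then show ?thesis
      using search_consistent[OF cons_j \<open>set (take m C) \<subseteq> set R\<close>] False halves(1)
      by (simp add: st'_def m_def Let_def)
  qed
qed

lemma trans_consistent:
  assumes "consistent st" "gstate_output st = GTest h"
  shows "consistent (gbsa_trans n d st (h \<inter> k \<noteq> {})) \<and>
         potential (gbsa_trans n d st (h \<inter> k \<noteq> {})) < potential st"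
proof (cases st)
  case (PartT j R K)
  then show ?thesis using assms trans_part_consistent[of j R K]
    by (simp add: gstate_output_def del: gbsa_trans.simps)
next
  case (SearchT j R C K)
  then show ?thesis using assms trans_search_consistent[of j R C K]
    by (simp add: gstate_output_def del: gbsa_trans.simps)
qed (use assms in \<open>simp add: gstate_output_def\<close>)

lemma run_from_consistent:
  assumes "consistent st"
  shows "\<exists>bs. length bs \<le> potential st \<and>
    gstate_output (foldl (gbsa_trans n d) st bs) = GResult k \<and>
    (\<forall>l b. prefix (l @ [b]) bs \<longrightarrow>
      (\<exists>h. gstate_output (foldl (gbsa_trans n d) st l) = GTest h \<and> (b \<longleftrightarrow> h \<inter> k \<noteq> {})))"
  using assms
proof (induction "potential st" arbitrary: st rule: less_induct)
  case less
  show ?case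
  proof (cases "gstate_output st")
    case (GResult K)
    then have "st = GDone k" using less.prems by (cases st) (auto simp: gstate_output_def)
    then show ?thesis by (intro exI[of _ "[]"]) (simp add: gstate_output_def)
  next
    case (GTest h)
    define b where "b = (h \<inter> k \<noteq> {})"
    define st' where "st' = gbsa_trans n d st b"
    have "consistent st'" "potential st' < potential st"
      using trans_consistent[OF less.prems GTest] by (simp_all add: st'_def b_def)
    then obtain bs where bs: "length bs \<le> potential st'"
      "gstate_output (foldl (gbsa_trans n d) st' bs) = GResult k"
      "\<forall>l c. prefix (l @ [c]) bs \<longrightarrow>
         (\<exists>h. gstate_output (foldl (gbsa_trans n d) st' l) = GTest h \<and> (c \<longleftrightarrow> h \<inter> k \<noteq> {}))"
      using less.hyps by blast
    show ?thesis
    proof (intro exI[of _ "b # bs"] conjI allI impI)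
      show "length (b # bs) \<le> potential st"
        using bs(1) \<open>potential st' < potential st\<close> by simp
      show "gstate_output (foldl (gbsa_trans n d) st (b # bs)) = GResult k"
        using bs(2) by (simp add: st'_def)
    next
      fix l c assume "prefix (l @ [c]) (b # bs)"
      then consider "l = []" "c = b" | l' where "l = b # l'" "prefix (l' @ [c]) bs"
        by (cases l) auto
      then show "\<exists>h. gstate_output (foldl (gbsa_trans n d) st l) = GTest h \<and> (c \<longleftrightarrow> h \<inter> k \<noteq> {})"
        by cases (use GTest b_def bs(3) st'_def in auto)
    qed
  qed
qed

lemma gbsa_run_exists: "\<exists>bs. gbsa_run n d k bs \<and> length bs \<le> d + card k * (1 + depth)"
proof -
  have "consistent (gbsa_start_part n d 0 {})"
    and "potential (gbsa_start_part n d 0 {}) \<le> d + card k * (1 + depth)"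
    using start_part_consistent[of 0 "{}"] by (auto simp: lo_def)
  then show ?thesis
    using run_from_consistent
    unfolding gbsa_run_def gbsa_eq_gstate_output gbsa_state_def by (meson order_trans)
qed

end

definition gbsa_path :: "nat \<Rightarrow> nat \<Rightarrow> nat set \<Rightarrow> bool list" where
  "gbsa_path n d k = (THE bs. gbsa_run n d k bs)"

lemma
  assumes "1 \<le> d" "k \<subseteq> {..<n}"
  shows gbsa_run_gbsa_path: "gbsa_run n d k (gbsa_path n d k)"
    and length_gbsa_path: "length (gbsa_path n d k) \<le> d + card k * (1 + ceillog2 (Suc (n div d)))"
proof -
  interpret gbsa_target n d k using assms by unfold_locales
  obtain bs where bs: "gbsa_run n d k bs" "length bs \<le> d + card k * (1 + depth)"
    using gbsa_run_exists by blast
  then have "gbsa_path n d k = bs"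
    unfolding gbsa_path_def using gbsa_run_unique by blast
  then show "gbsa_run n d k (gbsa_path n d k)"
    and "length (gbsa_path n d k) \<le> d + card k * (1 + depth)"
    using bs by simp_all
qed

section \<open>Bins of the Moebius support\<close>

locale sparse_mobius =
  fixes n d s :: nat and f F :: "nat set \<Rightarrow> real"
  assumes d_pos: "1 \<le> d"
    and mobius: "is_mobius_coeffs n f F"
    and sparse: "sparse s F"
    and degree: "degree_le d F"
    and independent: "subset_sum_independent F"
begin

abbreviation supp :: "nat set set" where "supp \<equiv> mob_support F"

abbreviation path :: "nat set \<Rightarrow> bool list" where "path \<equiv> gbsa_path n d"

lemma supp_subset: "k \<in> supp \<Longrightarrow> k \<subseteq> {..<n}"
  using mobius by (auto simp: mob_support_def is_mobius_coeffs_def)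

lemma finite_supp: "finite supp"
proof -
  have "supp \<subseteq> Pow {..<n}" using supp_subset by blast
  then show ?thesis by (rule finite_subset) simp
qed

lemma card_supp: "card supp \<le> s"
  using sparse by (simp add: sparse_def)

lemma card_le_degree: "k \<in> supp \<Longrightarrow> card k \<le> d"
  using degree by (auto simp: mob_support_def degree_le_def)

lemma not_in_supp: "k \<notin> supp \<Longrightarrow> F k = 0"
  by (simp add: mob_support_def)

lemma sum_nonzero: "K \<subseteq> supp \<Longrightarrow> K \<noteq> {} \<Longrightarrow> sum F K \<noteq> 0"
  using independent by (simp add: subset_sum_independent_def)

lemma sum_Pow_eq_sum_supp:
  assumes "x \<subseteq> {..<n}"
  shows "(\<Sum>k\<in>Pow x. F k) = sum F (Pow x \<inter> supp)"
proof (rule sum.mono_neutral_right)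
  show "finite (Pow x)" using finite_subset[OF assms] by simp
qed (use not_in_supp in auto)

lemma gbsa_path_result: "k \<in> supp \<Longrightarrow> gbsa n d (path k) = GResult k"
  using gbsa_run_gbsa_path[OF d_pos supp_subset] by (simp add: gbsa_run_def)

lemma gbsa_path_outcome:
  assumes "k \<in> supp" "prefix (l @ [b]) (path k)" "gbsa n d l = GTest h"
  shows "b \<longleftrightarrow> h \<inter> k \<noteq> {}"
  using gbsa_run_gbsa_path[OF d_pos supp_subset[OF assms(1)]] assms(2,3)
  unfolding gbsa_run_def by fastforce

lemma gbsa_path_test:
  assumes "k \<in> supp" "prefix (l @ [b]) (path k)"
  shows "\<exists>h. gbsa n d l = GTest h"
  using gbsa_run_gbsa_path[OF d_pos supp_subset[OF assms(1)]] assms(2)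
  unfolding gbsa_run_def by blast

lemma prefix_path_result:
  assumes "k \<in> supp" "prefix l (path k)" "gbsa n d l = GResult K"
  shows "l = path k" "K = k"
proof -
  show "l = path k"
  proof (rule ccontr)
    assume "l \<noteq> path k"
    then obtain b where "prefix (l @ [b]) (path k)" using prefix_neqE assms(2) by blast
    then show False using gbsa_path_test assms(1,3) by fastforce
  qed
  then show "K = k" using assms gbsa_path_result by simp
qed

lemma length_path:
  assumes "k \<in> supp"
  shows "length (path k) \<le> d * (2 + ceillog2 (Suc (n div d)))"
proof -
  have "length (path k) \<le> d + card k * (1 + ceillog2 (Suc (n div d)))"
    using length_gbsa_path[OF d_pos supp_subset[OF assms]] .
  also have "\<dots> \<le> d + d * (1 + ceillog2 (Suc (n div d)))"
    using card_le_degree[OF assms] by (simp only: add_le_cancel_left mult_le_mono1)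
  finally show ?thesis by (simp add: algebra_simps)
qed

definition bin :: "bool list \<Rightarrow> nat set set" where
  "bin l = {k \<in> supp. prefix l (path k)}"

definition subtree :: "bool list \<Rightarrow> bool list set" where
  "subtree l = {l'. prefix l l' \<and> (\<exists>k\<in>supp. prefix l' (path k))}"

lemma finite_bin: "finite (bin l)"
  using finite_supp by (simp add: bin_def)

lemma finite_subtree: "finite (subtree l)"
proof -
  have "subtree l \<subseteq> (\<Union>k\<in>supp. set (prefixes (path k)))"
    by (auto simp: subtree_def)
  then show ?thesis by (rule finite_subset) (simp add: finite_supp)
qed

lemma card_subtree_Nil: "card (subtree []) \<le> s * (d * (2 + ceillog2 (Suc (n div d))) + 1)"
proof -
  have "subtree [] = (\<Union>k\<in>supp. set (prefixes (path k)))"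
    by (auto simp: subtree_def)
  then have "card (subtree []) \<le> (\<Sum>k\<in>supp. card (set (prefixes (path k))))"
    using card_UN_le[OF finite_supp, of "\<lambda>k. set (prefixes (path k))"] by simp
  also have "\<dots> \<le> (\<Sum>k\<in>supp. d * (2 + ceillog2 (Suc (n div d))) + 1)"
    using length_path by (intro sum_mono) simp
  also have "\<dots> = card supp * (d * (2 + ceillog2 (Suc (n div d))) + 1)"
    by simp
  also have "\<dots> \<le> s * (d * (2 + ceillog2 (Suc (n div d))) + 1)"
    using card_supp by (rule mult_le_mono1)
  finally show ?thesis .
qed

lemma card_subtree_split:
  assumes "bin l \<noteq> {}"
  shows "card (subtree l) = 1 + card (subtree (l @ [False])) + card (subtree (l @ [True]))"
proof -
  have "subtree l = insert l (subtree (l @ [False]) \<union> subtree (l @ [True]))"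
  proof (intro equalityI subsetI)
    fix l' assume l': "l' \<in> subtree l"
    show "l' \<in> insert l (subtree (l @ [False]) \<union> subtree (l @ [True]))"
    proof (cases "l' = l")
      case False
      then obtain b where "prefix (l @ [b]) l'"
        using l' prefix_neqE by (auto simp: subtree_def)
      then show ?thesis using l' by (cases b) (auto simp: subtree_def)
    qed simp
  next
    fix l' assume "l' \<in> insert l (subtree (l @ [False]) \<union> subtree (l @ [True]))"
    then show "l' \<in> subtree l"
      using assms by (auto simp: subtree_def bin_def dest: append_prefixD)
  qed
  moreover have "l \<notin> subtree (l @ [False]) \<union> subtree (l @ [True])"
    by (auto simp: subtree_def dest: prefix_length_le)
  moreover have "subtree (l @ [False]) \<inter> subtree (l @ [True]) = {}"
    by (auto simp: subtree_def prefix_def)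
  ultimately show ?thesis using finite_subtree by (simp add: card_Un_disjoint)
qed

lemma bin_split:
  assumes "gbsa n d l = GTest h"
  shows "bin l = bin (l @ [False]) \<union> bin (l @ [True])"
    and "bin (l @ [False]) \<inter> bin (l @ [True]) = {}"
proof -
  show "bin l = bin (l @ [False]) \<union> bin (l @ [True])"
  proof (intro equalityI subsetI)
    fix k assume k: "k \<in> bin l"
    then have "l \<noteq> path k" using assms gbsa_path_result by (auto simp: bin_def)
    then obtain b where "prefix (l @ [b]) (path k)"
      using k prefix_neqE by (auto simp: bin_def)
    then show "k \<in> bin (l @ [False]) \<union> bin (l @ [True])"
      using k by (cases b) (auto simp: bin_def)
  qed (auto simp: bin_def dest: append_prefixD)
  show "bin (l @ [False]) \<inter> bin (l @ [True]) = {}"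
    by (auto simp: bin_def prefix_def)
qed

section \<open>The invariant of FASMT\<close>

fun valid_entry :: "qentry \<Rightarrow> bool" where
  "valid_entry (l, v, H) \<longleftrightarrow> v = sum F (bin l) \<and> length H = length l \<and>
     (\<forall>i<length l. gbsa n d (take i l) = GTest (H ! i))"

definition covered :: "qentry list \<Rightarrow> nat set \<Rightarrow> bool" where
  "covered Q k \<longleftrightarrow> (\<exists>q\<in>set Q. prefix (fst q) (path k))"

text \<open>The last conjunct records that labels are processed in lexicographic order: the path
  of every coefficient already stored in the table lies to the left of all pending labels.\<close>

definition fasmt_inv :: "qentry list \<Rightarrow> (nat set \<Rightarrow> real) \<Rightarrow> bool" where
  "fasmt_inv Q T \<longleftrightarrow>
     sorted_wrt (\<lambda>q q'. diverges_left (fst q) (fst q')) Q \<and> (\<forall>q\<in>set Q. valid_entry q) \<and>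
     (\<forall>k. T k = (if k \<in> supp \<and> \<not> covered Q k then F k else 0)) \<and>
     (\<forall>k\<in>supp. \<not> covered Q k \<longrightarrow> (\<forall>q\<in>set Q. diverges_left (path k) (fst q)))"

lemma covered_Cons: "covered (q # Q) k \<longleftrightarrow> prefix (fst q) (path k) \<or> covered Q k"
  by (auto simp: covered_def)

lemma valid_entry_outcome:
  assumes "valid_entry (l, v, H)" "k \<in> supp" "prefix l (path k)" "i < length l"
  shows "l ! i \<longleftrightarrow> H ! i \<inter> k \<noteq> {}"
proof -
  have "prefix (take i l @ [l ! i]) l"
    using take_is_prefix[of "Suc i" l] by (simp add: take_Suc_conv_app_nth assms(4))
  then have "prefix (take i l @ [l ! i]) (path k)" using assms(3) by (rule prefix_order.trans)
  then show ?thesis using gbsa_path_outcome assms by simp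
qed

lemma path_not_prefix_of_test_label:
  assumes "valid_entry (l, v, H)" "gbsa n d l = GTest h" "k \<in> supp"
  shows "\<not> prefix (path k) l"
proof
  assume "prefix (path k) l"
  then have "path k = take (length (path k)) l" "length (path k) \<le> length l"
    by (auto simp: prefix_def)
  then show False using assms gbsa_path_result[OF assms(3)]
    by (metis gresult.distinct(1) order_le_less take_all valid_entry.simps)
qed

lemma below_query_not_right_of_label:
  assumes "valid_entry (l, v, H)" "k \<in> supp" "k \<subseteq> query_point n l H h"
  shows "\<not> diverges_left l (path k)"
proof
  assume "diverges_left l (path k)"
  then obtain u r1 r2 where u: "l = u @ False # r1" "path k = u @ True # r2"
    by (auto simp: diverges_left_iff)
  define i where "i = length u"
  have i: "i < length l" "\<not> l ! i" "take i l = u" using u by (simp_all add: i_def)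
  have "gbsa n d u = GTest (H ! i)" using assms(1) i by auto
  moreover have "prefix (u @ [True]) (path k)" using u by (simp add: prefix_def)
  ultimately have "H ! i \<inter> k \<noteq> {}" using gbsa_path_outcome[OF assms(2)] by blast
  moreover have "H ! i \<inter> query_point n l H h = {}"
    using i by (auto simp: query_point_def)
  ultimately show False using assms(3) by blast
qed

lemma left_child_below_query:
  assumes valid: "valid_entry (l, v, H)" and test: "gbsa n d l = GTest h"
    and k: "k \<in> bin (l @ [False])"
  shows "k \<subseteq> query_point n l H h"
proof -
  have supp: "k \<in> supp" and pre: "prefix (l @ [False]) (path k)"
    using k by (auto simp: bin_def)
  have "H ! i \<inter> k = {}" if "i < length l" "\<not> l ! i" for i
    using valid_entry_outcome[OF valid supp append_prefixD[OF pre]] that by blast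
  moreover have "h \<inter> k = {}" using gbsa_path_outcome[OF supp pre test] by simp
  ultimately show ?thesis
    using supp_subset[OF supp] by (auto simp: query_point_def)
qed

lemma covered_below_query_in_left_child:
  assumes inv: "fasmt_inv ((l, v, H) # Q) T" and test: "gbsa n d l = GTest h"
    and k: "k \<in> supp" "k \<subseteq> query_point n l H h" "covered ((l, v, H) # Q) k"
  shows "k \<in> bin (l @ [False])"
proof -
  have valid: "valid_entry (l, v, H)"
    and sorted: "\<forall>q\<in>set Q. diverges_left l (fst q)"
    using inv by (auto simp: fasmt_inv_def)
  consider "prefix l (path k)" | "diverges_left (path k) l"
    using prefix_or_diverges_left path_not_prefix_of_test_label[OF valid test k(1)]
      below_query_not_right_of_label[OF valid k(1,2)] by blast
  then show ?thesis
  proof cases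
    case 1
    have "l \<noteq> path k" using test gbsa_path_result[OF k(1)] by auto
    with 1 obtain b where pre: "prefix (l @ [b]) (path k)" by (rule prefix_neqE)
    have "h \<inter> k = {}" using k(2) by (auto simp: query_point_def)
    then have "\<not> b" using gbsa_path_outcome[OF k(1) pre test] by simp
    then show ?thesis using k(1) pre by (simp add: bin_def)
  next
    case 2
    obtain q where q: "q \<in> set ((l, v, H) # Q)" "prefix (fst q) (path k)"
      using k(3) unfolding covered_def by blast
    have "diverges_left (path k) (fst q)"
      using q(1) 2 sorted diverges_left_trans by auto
    then show ?thesis
      using q(2) diverges_left_no_common_extension by blast
  qed
qed

lemma residual_query:
  assumes inv: "fasmt_inv ((l, v, H) # Q) T" and test: "gbsa n d l = GTest h"
  shows "f (query_point n l H h) - (\<Sum>k\<in>Pow (query_point n l H h). T k) = sum F (bin (l @ [False]))"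
proof -
  define x where "x = query_point n l H h"
  define U where "U = {k \<in> Pow x \<inter> supp. \<not> covered ((l, v, H) # Q) k}"
  have x: "x \<subseteq> {..<n}" by (simp add: x_def query_point_def)
  have fin: "finite (Pow x)" using finite_subset[OF x] by simp
  have valid: "valid_entry (l, v, H)" using inv by (simp add: fasmt_inv_def)
  have "f x = sum F (Pow x \<inter> supp)"
    using mobius x sum_Pow_eq_sum_supp by (simp add: is_mobius_coeffs_def)
  also have "Pow x \<inter> supp = bin (l @ [False]) \<union> U"
    using left_child_below_query[OF valid test] covered_below_query_in_left_child[OF inv test]
    by (auto simp: U_def bin_def x_def)
  also have "sum F \<dots> = sum F (bin (l @ [False])) + sum F U"
  proof (rule sum.union_disjoint)
    show "finite U" using fin by (simp add: U_def)
    show "bin (l @ [False]) \<inter> U = {}"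
      by (auto simp: U_def bin_def covered_def dest: append_prefixD)
  qed (rule finite_bin)
  also have "sum F U = (\<Sum>k\<in>Pow x. T k)"
  proof -
    have "(\<Sum>k\<in>Pow x. T k) = (\<Sum>k\<in>Pow x. if k \<in> supp \<and> \<not> covered ((l, v, H) # Q) k then F k else 0)"
      using inv by (simp add: fasmt_inv_def)
    also have "\<dots> = sum F {k \<in> Pow x. k \<in> supp \<and> \<not> covered ((l, v, H) # Q) k}"
      by (rule sum.inter_filter[OF fin, symmetric])
    finally show ?thesis by (simp add: U_def Int_def conj_assoc)
  qed
  finally show ?thesis by (simp add: x_def)
qed

lemma fasmt_inv_skip:
  assumes inv: "fasmt_inv ((l, 0, H) # Q) T"
  shows "fasmt_inv Q T"
proof -
  have "sum F (bin l) = 0" using inv by (simp add: fasmt_inv_def)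
  moreover have "bin l \<subseteq> supp" by (auto simp: bin_def)
  ultimately have "bin l = {}" using sum_nonzero by blast
  then have "covered ((l, 0, H) # Q) k = covered Q k" if "k \<in> supp" for k
    using that by (auto simp: covered_Cons bin_def)
  then show ?thesis using inv by (auto simp: fasmt_inv_def)
qed

lemma fasmt_inv_store:
  assumes inv: "fasmt_inv ((l, v, H) # Q) T" and v: "v \<noteq> 0"
    and result: "gbsa n d l = GResult K"
  shows "fasmt_inv Q (T(K := v))"
proof -
  have v_bin: "v = sum F (bin l)" and sorted: "\<forall>q\<in>set Q. diverges_left l (fst q)"
    using inv by (auto simp: fasmt_inv_def)
  have "bin l \<noteq> {}" using v v_bin by auto
  moreover have "bin l \<subseteq> {K}"
    using prefix_path_result(2)[OF _ _ result] by (auto simp: bin_def)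
  ultimately have bin_l: "bin l = {K}" by blast
  then have K: "K \<in> supp" "l = path K" and "v = F K"
    using prefix_path_result(1)[OF _ _ result] v_bin by (auto simp: bin_def)
  have "\<not> covered Q K"
    using K sorted diverges_left_no_common_extension by (fastforce simp: covered_def)
  moreover have covered_eq: "covered ((l, v, H) # Q) k = covered Q k" if "k \<in> supp" "k \<noteq> K" for k
    using that bin_l by (auto simp: covered_Cons bin_def)
  ultimately have "\<forall>k. (T(K := v)) k = (if k \<in> supp \<and> \<not> covered Q k then F k else 0)"
    using inv K \<open>v = F K\<close> by (auto simp: fasmt_inv_def)
  moreover have "\<forall>q\<in>set Q. diverges_left (path k) (fst q)" if "k \<in> supp" "\<not> covered Q k" for k
  proof (cases "k = K")
    case False
    then show ?thesis using inv that covered_eq by (auto simp: fasmt_inv_def)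
  qed (use K sorted in simp)
  moreover have "sorted_wrt (\<lambda>q q'. diverges_left (fst q) (fst q')) Q" "\<forall>q\<in>set Q. valid_entry q"
    using inv by (simp_all add: fasmt_inv_def)
  ultimately show ?thesis unfolding fasmt_inv_def by blast
qed

lemma valid_entry_child:
  assumes "valid_entry (l, v, H)" "gbsa n d l = GTest h"
  shows "valid_entry (l @ [b], sum F (bin (l @ [b])), H @ [h])"
  using assms by (auto simp: nth_append less_Suc_eq)

lemma fasmt_inv_split:
  assumes inv: "fasmt_inv ((l, v, H) # Q) T" and test: "gbsa n d l = GTest h"
    and m: "m = sum F (bin (l @ [False]))"
  shows "fasmt_inv (pq_insert (l @ [True], v - m, H @ [h]) (pq_insert (l @ [False], m, H @ [h]) Q)) T"
    (is "fasmt_inv ?Q' T")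
proof -
  have valid: "valid_entry (l, v, H)" and valid_Q: "\<forall>q\<in>set Q. valid_entry q"
    using inv by (simp_all add: fasmt_inv_def)
  have sorted: "sorted_wrt (\<lambda>q q'. diverges_left (fst q) (fst q')) ((l, v, H) # Q)"
    and table: "\<forall>k. T k = (if k \<in> supp \<and> \<not> covered ((l, v, H) # Q) k then F k else 0)"
    and left: "\<forall>k\<in>supp. \<not> covered ((l, v, H) # Q) k \<longrightarrow>
                 (\<forall>q\<in>set ((l, v, H) # Q). diverges_left (path k) (fst q))"
    using inv unfolding fasmt_inv_def by blast+
  have bins: "bin l = bin (l @ [False]) \<union> bin (l @ [True])"
    "bin (l @ [False]) \<inter> bin (l @ [True]) = {}"
    using bin_split[OF test] by auto
  have "v - m = sum F (bin (l @ [True]))"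
    using valid m bins finite_bin by (simp add: sum.union_disjoint)
  then have valid_children: "valid_entry (l @ [False], m, H @ [h])" "valid_entry (l @ [True], v - m, H @ [h])"
    using valid_entry_child[OF valid test] m by simp_all
  have set_Q': "set ?Q' = {(l @ [True], v - m, H @ [h]), (l @ [False], m, H @ [h])} \<union> set Q"
    by (simp add: set_pq_insert)
  have child_left: "diverges_left (l @ [b]) (fst q)" if "q \<in> set Q" for b q
    using sorted that diverges_left_prefix_mono by fastforce
  have "sorted_wrt (\<lambda>q q'. diverges_left (fst q) (fst q')) (pq_insert (l @ [False], m, H @ [h]) Q)"
    by (rule sorted_pq_insert) (use sorted child_left in auto)
  then have sorted': "sorted_wrt (\<lambda>q q'. diverges_left (fst q) (fst q')) ?Q'"
    by (rule sorted_pq_insert) (use child_left in \<open>auto simp: set_pq_insert\<close>)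
  have covered': "covered ?Q' k = covered ((l, v, H) # Q) k" if "k \<in> supp" for k
    using that bins by (auto simp: covered_def set_Q' bin_def)
  have "diverges_left (path k) (fst q)"
    if "k \<in> supp" "\<not> covered ?Q' k" "q \<in> set ?Q'" for k q
    using that left covered' diverges_left_prefix_mono[of "path k" l "path k"]
    by (auto simp: set_Q')
  moreover have "\<forall>q\<in>set ?Q'. valid_entry q"
    using valid_Q valid_children unfolding set_Q' by blast
  moreover have "\<forall>k. T k = (if k \<in> supp \<and> \<not> covered ?Q' k then F k else 0)"
    using table covered' by auto
  ultimately show ?thesis using sorted' unfolding fasmt_inv_def by blast
qed

end

section \<open>Termination and complexity\<close>

lemma funpow_decreasing_measure:
  fixes g :: "'s \<Rightarrow> 's" and \<mu> :: "'s \<Rightarrow> nat" and c :: "'s \<Rightarrow> real"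
  assumes step: "\<And>x. P x \<Longrightarrow> \<not> halted x \<Longrightarrow> P (g x) \<and> \<mu> (g x) < \<mu> x \<and> c (g x) \<le> c x + b"
    and b: "0 \<le> b" and "P x"
  shows "\<exists>t. halted ((g ^^ t) x) \<and> P ((g ^^ t) x) \<and> c ((g ^^ t) x) \<le> c x + real (\<mu> x) * b"
  using \<open>P x\<close>
proof (induction "\<mu> x" arbitrary: x rule: less_induct)
  case less
  show ?case
  proof (cases "halted x")
    case True
    then show ?thesis using less.prems b by (intro exI[of _ 0]) simp
  next
    case False
    then have gx: "P (g x)" "\<mu> (g x) < \<mu> x" "c (g x) \<le> c x + b"
      using step less.prems by blast+
    then obtain t where t: "halted ((g ^^ t) (g x))" "P ((g ^^ t) (g x))"
      "c ((g ^^ t) (g x)) \<le> c (g x) + real (\<mu> (g x)) * b"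
      using less.hyps by blast
    have "real (\<mu> (g x)) * b + b \<le> real (\<mu> x) * b"
      using gx(2) b mult_right_mono[of "real (\<mu> (g x)) + 1" "real (\<mu> x)" b]
      by (simp add: algebra_simps)
    then show ?thesis
      using t gx(3) by (intro exI[of _ "Suc t"]) (simp add: funpow_Suc_right del: funpow.simps)
  qed
qed

context sparse_mobius
begin

definition weight :: "qentry list \<Rightarrow> nat" where
  "weight Q = (\<Sum>q\<leftarrow>Q. card (subtree (fst q)))"

lemma weight_Nil [simp]: "weight [] = 0"
  and weight_Cons [simp]: "weight (q # Q) = card (subtree (fst q)) + weight Q"
  by (simp_all add: weight_def)

lemma weight_pq_insert [simp]: "weight (pq_insert q Q) = card (subtree (fst q)) + weight Q"
  unfolding weight_def by (rule sum_list_map_pq_insert)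

lemma table_cost:
  assumes "fasmt_inv Q T"
  shows "(\<Sum>k\<in>{k. T k \<noteq> 0}. real (card k) + 1) \<le> real s * (real d + 1)"
proof -
  have "{k. T k \<noteq> 0} \<subseteq> supp" using assms by (auto simp: fasmt_inv_def split: if_splits)
  then have "(\<Sum>k\<in>{k. T k \<noteq> 0}. real (card k) + 1) \<le> (\<Sum>k\<in>supp. real (card k) + 1)"
    by (intro sum_mono2[OF finite_supp]) auto
  also have "\<dots> \<le> (\<Sum>k\<in>supp. real d + 1)"
    using card_le_degree by (intro sum_mono) simp
  also have "\<dots> \<le> real s * (real d + 1)"
    using card_supp by (simp add: mult_right_mono)
  finally show ?thesis .
qed

definition queue_measure :: "qentry list \<Rightarrow> nat" where
  "queue_measure Q = 3 * weight Q + length Q"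

text \<open>Splitting the entry with label \<open>l\<close> replaces \<open>subtree l\<close> by the two child
  subtrees, which together have one node less, so the queue measure drops by two while
  \<open>nqueries + weight\<close> stays put.\<close>

lemma fasmt_step_progress:
  assumes inv: "fasmt_inv (queue st) (table st)" and nonempty: "queue st \<noteq> []"
    and bounded: "queue_measure (queue st) \<le> M"
  defines "st' \<equiv> fasmt_step n d f st"
  shows "fasmt_inv (queue st') (table st') \<and> queue_measure (queue st') < queue_measure (queue st) \<and>
    nqueries st' + weight (queue st') \<le> nqueries st + weight (queue st) \<and>
    cost st' \<le> cost st + (1 + log 2 (real M + 1) + 2 * real n + real s * (real d + 1))"
proof -
  obtain l v H Q where queue: "queue st = (l, v, H) # Q"
    using nonempty by (metis list.exhaust prod_cases3)
  define base where "base = cost st + 1 + log 2 (real (length (queue st)) + 1)"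
  have base: "base \<le> cost st + 1 + log 2 (real M + 1)"
    using bounded by (simp add: base_def queue_measure_def)
  have "0 \<le> real s * (real d + 1)" by simp
  with base have pop_cost:
    "base + real n \<le> cost st + (1 + log 2 (real M + 1) + 2 * real n + real s * (real d + 1))"
    by linarith
  consider "v = 0" | K where "v \<noteq> 0" "gbsa n d l = GResult K" | h where "v \<noteq> 0" "gbsa n d l = GTest h"
    by (cases "gbsa n d l") auto
  then show ?thesis
  proof cases
    case 1
    then have "st' = st\<lparr>queue := Q, cost := base\<rparr>"
      by (simp add: st'_def fasmt_step_def queue base_def)
    then show ?thesis
      using fasmt_inv_skip inv 1 queue pop_cost by (simp add: queue_measure_def)
  next
    case (2 K)
    then have "st' = st\<lparr>queue := Q, table := (table st)(K := v), cost := base + real n\<rparr>"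
      by (simp add: st'_def fasmt_step_def queue base_def)
    then show ?thesis
      using fasmt_inv_store inv 2 queue pop_cost by (simp add: queue_measure_def)
  next
    case (3 h)
    define x where "x = query_point n l H h"
    define m where "m = f x - (\<Sum>k\<in>Pow x. table st k)"
    have m: "m = sum F (bin (l @ [False]))"
      using residual_query inv 3(2) queue by (simp add: m_def x_def)
    have "sum F (bin l) \<noteq> 0" using inv 3(1) queue by (simp add: fasmt_inv_def)
    then have "bin l \<noteq> {}" by auto
    then have split: "card (subtree l) = 1 + card (subtree (l @ [False])) + card (subtree (l @ [True]))"
      by (rule card_subtree_split)
    have "st' = st\<lparr>queue := pq_insert (l @ [True], v - m, H @ [h]) (pq_insert (l @ [False], m, H @ [h]) Q),
        nqueries := Suc (nqueries st),
        cost := base + 2 * real n + (\<Sum>k\<in>{k. table st k \<noteq> 0}. real (card k) + 1)\<rparr>"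
      using 3 by (simp add: st'_def fasmt_step_def queue base_def Let_def m_def x_def)
    then show ?thesis
      using fasmt_inv_split[OF _ 3(2) m] inv queue split base table_cost[OF inv]
      by (simp add: queue_measure_def length_pq_insert)
  qed
qed

lemma fasmt_inv_init: "fasmt_inv [([], f {..<n}, [])] (\<lambda>_. 0)"
proof -
  have "Pow {..<n} \<inter> supp = supp" using supp_subset by blast
  then have "f {..<n} = sum F supp"
    using mobius sum_Pow_eq_sum_supp[of "{..<n}"] by (simp add: is_mobius_coeffs_def)
  moreover have "bin [] = supp" by (simp add: bin_def)
  ultimately show ?thesis by (simp add: fasmt_inv_def covered_def)
qed

lemma fasmt_terminates:
  defines "N \<equiv> card (subtree [])"
  shows "\<exists>t. queue (fasmt_iter n d f t) = [] \<and> table (fasmt_iter n d f t) = F \<and>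
    nqueries (fasmt_iter n d f t) \<le> 1 + N \<and>
    cost (fasmt_iter n d f t) \<le> real n + (3 * real N + 1) *
      (1 + log 2 (real (3 * N + 1) + 1) + 2 * real n + real s * (real d + 1))"
proof -
  define b where "b = 1 + log 2 (real (3 * N + 1) + 1) + 2 * real n + real s * (real d + 1)"
  define \<mu> where "\<mu> st = queue_measure (queue st)" for st :: fstate
  define P where "P st \<longleftrightarrow> fasmt_inv (queue st) (table st) \<and> \<mu> st \<le> 3 * N + 1 \<and>
    nqueries st + weight (queue st) \<le> 1 + N" for st :: fstate
  have step: "P (fasmt_step n d f st) \<and> \<mu> (fasmt_step n d f st) < \<mu> st \<and>
      cost (fasmt_step n d f st) \<le> cost st + b"
    if "P st" "queue st \<noteq> []" for st :: fstate
    using fasmt_step_progress[of st "3 * N + 1"] that by (auto simp: P_def \<mu>_def b_def)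
  have init: "P (fasmt_init n f)" "\<mu> (fasmt_init n f) = 3 * N + 1"
    using fasmt_inv_init by (simp_all add: P_def \<mu>_def queue_measure_def fasmt_init_def N_def)
  have "0 \<le> b" by (simp add: b_def)
  then obtain t where t: "queue (fasmt_iter n d f t) = []" "P (fasmt_iter n d f t)"
    "cost (fasmt_iter n d f t) \<le> real n + real (3 * N + 1) * b"
    using funpow_decreasing_measure[where halted = "\<lambda>st. queue st = []", OF step _ init(1)] init(2)
    by (auto simp: fasmt_iter_def fasmt_init_def)
  show ?thesis
  proof (intro exI[of _ t] conjI)
    show "queue (fasmt_iter n d f t) = []" by (rule t(1))
    show "table (fasmt_iter n d f t) = F"
      using t(1,2) not_in_supp by (auto simp: P_def fasmt_inv_def covered_def)
    show "nqueries (fasmt_iter n d f t) \<le> 1 + N" using t(2) by (simp add: P_def)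
    show "cost (fasmt_iter n d f t) \<le> real n + (3 * real N + 1) *
        (1 + log 2 (real (3 * N + 1) + 1) + 2 * real n + real s * (real d + 1))"
      using t(3) by (simp add: b_def ac_simps)
  qed
qed

lemma fasmt_complexity:
  assumes s: "1 \<le> s" and dn: "d \<le> n"
  shows "\<exists>t. queue (fasmt_iter n d f t) = [] \<and> table (fasmt_iter n d f t) = F \<and>
    real (nqueries (fasmt_iter n d f t)) \<le> 6 * real s * real d * (1 + log 2 (real n / real d)) \<and>
    cost (fasmt_iter n d f t)
      \<le> 250 * (real s * real d + real n) * real s * real d * (1 + log 2 (real n / real d))"
proof -
  define N where "N = card (subtree [])"
  define e where "e = ceillog2 (Suc (n div d))"
  define L where "L = log 2 (real n / real d)"
  define G where "G = log 2 (real (3 * N + 1) + 1)"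
  obtain t where t: "queue (fasmt_iter n d f t) = []" "table (fasmt_iter n d f t) = F"
    "nqueries (fasmt_iter n d f t) \<le> 1 + N"
    "cost (fasmt_iter n d f t) \<le> real n + (3 * real N + 1) * (1 + G + 2 * real n + real s * (real d + 1))"
    using fasmt_terminates unfolding N_def G_def by blast
  have N: "N \<le> s * (d * (2 + e) + 1)" using card_subtree_Nil by (simp add: N_def e_def)
  have "real N \<le> real (s * (d * (2 + e) + 1))" using N by (simp only: of_nat_le_iff)
  also have "\<dots> = real s * (real d * (2 + real e) + 1)" by (simp add: algebra_simps)
  finally have N': "real N \<le> real s * (real d * (2 + real e) + 1)" .
  have G': "G \<le> 5 + real s + real d + real e"
    using log2_tree_size_le[OF s d_pos N] by (simp add: G_def)
  have e': "real e \<le> L + 2" and L_bounds: "0 \<le> L" "L \<le> real n"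
    using ceillog2_Suc_div_le[OF d_pos dn] log2_div_le[OF d_pos dn] d_pos dn
    by (simp_all add: e_def L_def)
  have "1 \<le> real s" "1 \<le> real d" "0 \<le> real N" "0 \<le> G"
    using s d_pos by (simp_all add: G_def)
  note bounds = complexity_arith[OF this(1,2) L_bounds this(3) N' e' this(4) G']
  have "real (nqueries (fasmt_iter n d f t)) \<le> real (1 + N)" using t(3) by (simp only: of_nat_le_iff)
  then show ?thesis
    using t(1,2,4) bounds unfolding L_def by (intro exI[of _ t] conjI) simp_all
qed

end

theorem theorem2:
  "\<exists>C1 C2 :: real.
     \<forall>(n::nat) (d::nat) (s::nat) (f::nat set \<Rightarrow> real) (F::nat set \<Rightarrow> real).
       1 \<le> s \<longrightarrow> 1 \<le> d \<longrightarrow> d \<le> n \<longrightarrow>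
       is_mobius_coeffs n f F \<longrightarrow> sparse s F \<longrightarrow> degree_le d F \<longrightarrow>
       subset_sum_independent F \<longrightarrow>
       (\<exists>t. queue (fasmt_iter n d f t) = [] \<and>
            table (fasmt_iter n d f t) = F \<and>
            real (nqueries (fasmt_iter n d f t))
              \<le> C1 * real s * real d * (1 + log 2 (real n / real d)) \<and>
            cost (fasmt_iter n d f t)
              \<le> C2 * (real s * real d + real n) * real s * real d * (1 + log 2 (real n / real d)))"
proof (rule exI[of _ 6], rule exI[of _ 250], intro allI impI)
  fix n d s :: nat and f F :: "nat set \<Rightarrow> real"
  assume "1 \<le> s" "1 \<le> d" "d \<le> n"
    and "is_mobius_coeffs n f F" "sparse s F" "degree_le d F" "subset_sum_independent F"
  then interpret sparse_mobius n d s f F by unfold_locales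
  show "\<exists>t. queue (fasmt_iter n d f t) = [] \<and> table (fasmt_iter n d f t) = F \<and>
      real (nqueries (fasmt_iter n d f t)) \<le> 6 * real s * real d * (1 + log 2 (real n / real d)) \<and>
      cost (fasmt_iter n d f t)
        \<le> 250 * (real s * real d + real n) * real s * real d * (1 + log 2 (real n / real d))"
    using \<open>1 \<le> s\<close> \<open>d \<le> n\<close> by (rule fasmt_complexity)
qed

end
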